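(* Let $\alpha\in\mathbb{R}$ be transcendental over $\mathbb{Q}$. Identify each element of $\mathbb{Q}(\alpha)$ with the unique rational function $r\in\mathbb{Q}(x)$ such that the element equals $r(\alpha)$, let $\mathbb{Q}(\alpha)^+$ be the set of those $r$ with $r(\alpha)>0$, and define $H_+=\{r\in \mathbb{Q}(\alpha)^+ : r'(\alpha)>0\}$, $H_0=\{r\in \mathbb{Q}(\alpha)^+ : r'(\alpha)=0\}$, $H_-=\{r\in \mathbb{Q}(\alpha)^+ : r'(\alpha)<0\}$. Then the only ways to write $\mathbb{Q}(\alpha)^+=A\sqcup B$ (unordered) with $A,B$ disjoint nonempty subsets each closed under addition and multiplication are $\mathbb{Q}(\alpha)^+=(H_+\cup H_0)\sqcup H_-$ and $\mathbb{Q}(\alpha)^+=H_+\sqcup(H_0\cup H_-)$. *)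

theory Defs
  imports "HOL-Analysis.Analysis" "HOL-Computational_Algebra.Polynomial_Factorial"
          "HOL-Computational_Algebra.Normalized_Fraction" "HOL-Computational_Algebra.Field_as_Ring"
begin

type_synonym ratfun = "rat poly fract"

definition ratfun_fun :: "ratfun \<Rightarrow> real \<Rightarrow> real" where
  "ratfun_fun r = (\<lambda>x. poly (map_poly of_rat (fst (quot_of_fract r))) x /
                        poly (map_poly of_rat (snd (quot_of_fract r))) x)"

definition ratfun_eval :: "ratfun \<Rightarrow> real \<Rightarrow> real" where
  "ratfun_eval r a = ratfun_fun r a"

definition ratfun_deriv :: "ratfun \<Rightarrow> real \<Rightarrow> real" where
  "ratfun_deriv r a = deriv (ratfun_fun r) a"

definition Qpos :: "real \<Rightarrow> ratfun set" where
  "Qpos a = {r. ratfun_eval r a > 0}"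

definition Hplus :: "real \<Rightarrow> ratfun set" where
  "Hplus a = {r \<in> Qpos a. ratfun_deriv r a > 0}"

definition Hzero :: "real \<Rightarrow> ratfun set" where
  "Hzero a = {r \<in> Qpos a. ratfun_deriv r a = 0}"

definition Hminus :: "real \<Rightarrow> ratfun set" where
  "Hminus a = {r \<in> Qpos a. ratfun_deriv r a < 0}"

definition add_mult_closed :: "ratfun set \<Rightarrow> bool" where
  "add_mult_closed S \<longleftrightarrow> (\<forall>x\<in>S. \<forall>y\<in>S. x + y \<in> S \<and> x * y \<in> S)"

end

theory Submission
  imports Defs
begin

text \<open>Since \<open>\<alpha>\<close> is transcendental, \<open>r \<mapsto> r(\<alpha>)\<close> is a field embedding of \<open>\<rat>(x)\<close> and
  \<open>r \<mapsto> r'(\<alpha>)\<close> a derivation along it.  Let \<open>\<rat>(\<alpha>)\<^sup>+ = A \<union> B\<close> with \<open>1 \<in> A\<close>.  All positive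
  rationals then lie in \<open>A\<close>, and a squaring trick shows that both parts are stable under
  adding rational constants as long as the result stays positive, so membership in \<open>B\<close> only
  depends on \<open>r\<close> modulo constants.  This property is additive and invariant under positive
  scaling, and either \<open>x\<close> or \<open>-x\<close> has it; for the corresponding sign \<open>t = \<plusminus>1\<close> one shows that
  \<open>t r'(\<alpha>) > 0\<close> puts \<open>r\<close> into \<open>B\<close> modulo constants, first for polynomials by induction on the
  degree (closedness under products of shifted factors is what makes the induction step
  work), then for quotients.  Hence \<open>B = {r. t r'(\<alpha>) > 0}\<close>.\<close>

section \<open>Rational polynomials and rational functions\<close>

lemma map_poly_of_rat_add [simp]:
  "map_poly (of_rat :: rat \<Rightarrow> 'a::field_char_0) (p + q) = map_poly of_rat p + map_poly of_rat q"
  by (rule poly_eqI) (simp add: coeff_map_poly of_rat_add)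

lemma map_poly_of_rat_uminus [simp]:
  "map_poly (of_rat :: rat \<Rightarrow> 'a::field_char_0) (- p) = - map_poly of_rat p"
  by (rule poly_eqI) (simp add: coeff_map_poly of_rat_minus)

lemma map_poly_of_rat_diff [simp]:
  "map_poly (of_rat :: rat \<Rightarrow> 'a::field_char_0) (p - q) = map_poly of_rat p - map_poly of_rat q"
  by (rule poly_eqI) (simp add: coeff_map_poly of_rat_diff)

lemma map_poly_of_rat_mult [simp]:
  "map_poly (of_rat :: rat \<Rightarrow> 'a::field_char_0) (p * q) = map_poly of_rat p * map_poly of_rat q"
  by (rule poly_eqI) (simp add: coeff_map_poly coeff_mult of_rat_sum of_rat_mult)

lemma map_poly_of_rat_pderiv [simp]:
  "map_poly (of_rat :: rat \<Rightarrow> 'a::field_char_0) (pderiv p) = pderiv (map_poly of_rat p)"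
  by (rule poly_eqI) (simp add: coeff_map_poly coeff_pderiv of_rat_mult of_rat_add)

lemma map_poly_of_rat_pCons [simp]:
  "map_poly (of_rat :: rat \<Rightarrow> 'a::field_char_0) (pCons c p) = pCons (of_rat c) (map_poly of_rat p)"
  by (simp add: map_poly_pCons)

lemma poly_of_rat_poly_nonzero:
  assumes "\<not> algebraic x" "p \<noteq> 0"
  shows "poly (map_poly of_rat p) x \<noteq> 0"
proof
  assume "poly (map_poly of_rat p) x = 0"
  moreover have "map_poly of_rat p \<noteq> 0" "\<forall>i. coeff (map_poly of_rat p) i \<in> \<rat>"
    using assms(2) by (auto simp: map_poly_eq_0_iff coeff_map_poly)
  ultimately show False
    using assms(1) by (auto simp: algebraic_altdef)
qed

lemma quotient_rule_cross_invariant: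
  fixes p b p' q' dp db dp' dq' :: "'a::field"
  assumes "b \<noteq> 0" "q' \<noteq> 0" and "p' * b = p * q'" and "dp' * b + p' * db = dp * q' + p * dq'"
  shows "(dp' * q' - p' * dq') / q'\<^sup>2 = (dp * b - p * db) / b\<^sup>2"
proof -
  have p': "p' = p * q' / b"
    using assms(1,3) by (simp add: field_simps)
  have dp': "dp' = (dp * q' + p * dq' - p' * db) / b"
    using assms(1,4) by (simp add: field_simps)
  show ?thesis
    unfolding dp' p' using assms(1,2) by (simp add: field_simps power2_eq_square)
qed

definition rconst :: "rat \<Rightarrow> ratfun" where
  "rconst c = to_fract [:c:]"

lemma rconst_0 [simp]: "rconst 0 = 0"
  by (simp add: rconst_def)

lemma rconst_1 [simp]: "rconst 1 = 1"
  by (simp add: rconst_def one_pCons[symmetric])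

lemma rconst_add: "rconst (a + b) = rconst a + rconst b"
  by (simp add: rconst_def to_fract_add[symmetric])

lemma rconst_mult: "rconst (a * b) = rconst a * rconst b"
  by (simp add: rconst_def to_fract_mult[symmetric] mult_to_poly)

lemma rconst_uminus: "rconst (- a) = - rconst a"
  by (simp add: rconst_def to_fract_uminus[symmetric])

lemma rconst_diff: "rconst (a - b) = rconst a - rconst b"
  by (simp add: rconst_def to_fract_diff[symmetric] diff_to_poly)

lemma rconst_of_nat: "rconst (of_nat n) = of_nat n"
  by (induct n) (simp_all add: rconst_add)

lemma rconst_numeral [simp]: "rconst (numeral n) = numeral n"
  using rconst_of_nat[of "numeral n"] by simp

lemma rconst_inverse: "rconst (inverse c) = inverse (rconst c)"
  by (cases "c = 0")
    (simp_all add: rconst_def to_fract_def eq_fract mult_to_poly one_pCons[symmetric])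

definition ratfun_X :: ratfun where
  "ratfun_X = to_fract [:0, 1:]"

definition poly_ratfun :: "rat poly \<Rightarrow> ratfun \<Rightarrow> ratfun" where
  "poly_ratfun p y = poly (map_poly rconst p) y"

lemma poly_ratfun_0 [simp]: "poly_ratfun 0 y = 0"
  by (simp add: poly_ratfun_def)

lemma poly_ratfun_pCons [simp]: "poly_ratfun (pCons a p) y = rconst a + y * poly_ratfun p y"
  by (simp add: poly_ratfun_def map_poly_pCons)

lemma poly_ratfun_1 [simp]: "poly_ratfun 1 y = 1"
  by (simp add: one_pCons)

lemma poly_ratfun_add [simp]: "poly_ratfun (p + q) y = poly_ratfun p y + poly_ratfun q y"
proof -
  have "map_poly rconst (p + q) = map_poly rconst p + map_poly rconst q"
    by (rule poly_eqI) (simp add: coeff_map_poly rconst_add)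
  then show ?thesis
    by (simp add: poly_ratfun_def)
qed

lemma poly_ratfun_smult [simp]: "poly_ratfun (smult a p) y = rconst a * poly_ratfun p y"
  by (simp add: poly_ratfun_def map_poly_smult rconst_mult)

lemma poly_ratfun_mult [simp]: "poly_ratfun (p * q) y = poly_ratfun p y * poly_ratfun q y"
  by (induction p) (simp_all add: algebra_simps)

lemma poly_ratfun_uminus [simp]: "poly_ratfun (- p) y = - poly_ratfun p y"
  using poly_ratfun_smult[of "- 1" p y] by (simp add: rconst_uminus)

lemma poly_ratfun_ratfun_X: "poly_ratfun p ratfun_X = to_fract p"
proof (induction p)
  case (pCons a p)
  have "pCons a p = [:a:] + [:0, 1:] * p"
    by simp
  then show ?case
    using pCons.IH by (simp add: rconst_def ratfun_X_def flip: to_fract_add to_fract_mult)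
qed simp

text \<open>Induction over \<open>p\<close> for statements about \<open>p(y)\<close>: splitting off \<open>p = c + x q\<close> writes
  \<open>p(y) = y q(y) + c\<close>, and each \<open>c' c + b y + a q(y)\<close> is again of the form \<open>p'(y)\<close> with
  \<open>deg p' < deg p\<close> once \<open>deg p \<ge> 2\<close>.\<close>
lemma poly_ratfun_induct:
  assumes linear: "\<And>a b. Q (rconst a + rconst b * y)"
    and step: "\<And>U V W. (\<And>a b c. Q (rconst c * W + rconst b * U + rconst a * V)) \<Longrightarrow> Q (U * V + W)"
  shows "Q (poly_ratfun p y)"
proof (induction "degree p" arbitrary: p rule: less_induct)
  case less
  obtain c0 p1 where p: "p = pCons c0 p1"
    by (cases p)
  show ?case
  proof (cases "degree p1 = 0")
    case True
    then obtain c1 where "p1 = [:c1:]"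
      by (rule degree_eq_zeroE)
    then show ?thesis
      using linear[of c0 c1] by (simp add: p mult.commute)
  next
    case False
    have "Q (y * poly_ratfun p1 y + rconst c0)"
    proof (rule step)
      fix a b c
      have "degree (smult a p1 + [:c * c0, b:]) \<le> degree p1"
        using False by (intro degree_add_le) (simp_all add: degree_smult_le)
      also have "\<dots> < degree p"
        using False by (auto simp: p)
      finally have "Q (poly_ratfun (smult a p1 + [:c * c0, b:]) y)"
        by (rule less)
      then show "Q (rconst c * rconst c0 + rconst b * y + rconst a * poly_ratfun p1 y)"
        by (simp add: rconst_mult algebra_simps)
    qed
    then show ?thesis
      by (simp add: p add.commute)
  qed
qed

section \<open>Evaluation and derivative at a transcendental point\<close>

locale transcendental_point =
  fixes \<alpha> :: real
  assumes transcendental: "\<not> algebraic \<alpha>"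
begin

abbreviation pval :: "rat poly \<Rightarrow> real" where
  "pval p \<equiv> poly (map_poly of_rat p) \<alpha>"

abbreviation E :: "ratfun \<Rightarrow> real" where
  "E r \<equiv> ratfun_eval r \<alpha>"

abbreviation D :: "ratfun \<Rightarrow> real" where
  "D r \<equiv> ratfun_deriv r \<alpha>"

lemma pval_nonzero: "p \<noteq> 0 \<Longrightarrow> pval p \<noteq> 0"
  using poly_of_rat_poly_nonzero[OF transcendental] .

lemma quot_of_fract_Fract_cross:
  assumes "quot_of_fract (Fract p b) = (p', q')" "b \<noteq> 0"
  shows "p' * b = p * q'" "q' \<noteq> 0"
proof -
  show "q' \<noteq> 0"
    using snd_quot_of_fract_nonzero[of "Fract p b"] assms(1) by simp
  moreover have "Fract p' q' = Fract p b"
    using Fract_quot_of_fract[of "Fract p b"] assms(1) by simp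
  ultimately show "p' * b = p * q'"
    using assms(2) by (simp add: eq_fract)
qed

text \<open>\<^const>\<open>ratfun_fun\<close> uses the normalized representative of a fraction; at a transcendental
  point every representative yields the same value and the same derivative.\<close>
lemma E_Fract:
  assumes "b \<noteq> 0"
  shows "E (Fract p b) = pval p / pval b"
proof -
  obtain p' q' where pq: "quot_of_fract (Fract p b) = (p', q')"
    by (cases "quot_of_fract (Fract p b)")
  note cross = quot_of_fract_Fract_cross[OF pq assms]
  have "pval p' * pval b = pval p * pval q'"
    using arg_cong[OF cross(1), of pval] by simp
  moreover have "pval b \<noteq> 0" "pval q' \<noteq> 0"
    using pval_nonzero assms cross(2) by auto
  ultimately show ?thesis
    by (simp add: ratfun_eval_def ratfun_fun_def pq frac_eq_eq)
qed

lemma D_Fract: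
  assumes "b \<noteq> 0"
  shows "D (Fract p b) = (pval (pderiv p) * pval b - pval p * pval (pderiv b)) / (pval b)\<^sup>2"
proof -
  obtain p' q' where pq: "quot_of_fract (Fract p b) = (p', q')"
    by (cases "quot_of_fract (Fract p b)")
  note cross = quot_of_fract_Fract_cross[OF pq assms]
  have val: "pval p' * pval b = pval p * pval q'"
    using arg_cong[OF cross(1), of pval] by simp
  have der: "pval (pderiv p') * pval b + pval p' * pval (pderiv b)
           = pval (pderiv p) * pval q' + pval p * pval (pderiv q')"
    using arg_cong[OF cross(1), of "\<lambda>p. pval (pderiv p)"] by (simp add: pderiv_mult algebra_simps)
  have nz: "pval b \<noteq> 0" "pval q' \<noteq> 0"
    using pval_nonzero assms cross(2) by auto
  have "((\<lambda>x. poly (map_poly of_rat p') x / poly (map_poly of_rat q') x) has_real_derivative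
          (pval (pderiv p') * pval q' - pval p' * pval (pderiv q')) / (pval q' * pval q')) (at \<alpha>)"
    using nz by (auto intro!: derivative_eq_intros)
  then have "D (Fract p b)
      = (pval (pderiv p') * pval q' - pval p' * pval (pderiv q')) / (pval q')\<^sup>2"
    by (simp add: ratfun_deriv_def ratfun_fun_def pq DERIV_imp_deriv power2_eq_square)
  also have "\<dots> = (pval (pderiv p) * pval b - pval p * pval (pderiv b)) / (pval b)\<^sup>2"
    by (rule quotient_rule_cross_invariant[OF nz val der])
  finally show ?thesis .
qed

lemma E_to_fract: "E (to_fract p) = pval p"
  by (simp add: to_fract_def E_Fract)

lemma D_to_fract: "D (to_fract p) = pval (pderiv p)"
  by (simp add: to_fract_def D_Fract)

lemma E_rconst [simp]: "E (rconst c) = of_rat c"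
  by (simp add: rconst_def E_to_fract)

lemma D_rconst [simp]: "D (rconst c) = 0"
  by (simp add: rconst_def D_to_fract)

lemma E_0 [simp]: "E 0 = 0"
  and E_1 [simp]: "E 1 = 1"
  and D_0 [simp]: "D 0 = 0"
  and D_1 [simp]: "D 1 = 0"
  using E_rconst[of 0] E_rconst[of 1] D_rconst[of 0] D_rconst[of 1] by simp_all

lemma E_add [simp]: "E (r + s) = E r + E s"
proof -
  obtain a b c d where "b \<noteq> 0" "r = Fract a b" "d \<noteq> 0" "s = Fract c d"
    by (cases r, cases s) auto
  moreover have "pval b \<noteq> 0" "pval d \<noteq> 0"
    using calculation pval_nonzero by auto
  ultimately show ?thesis
    by (simp add: E_Fract add_frac_eq)
qed

lemma E_mult [simp]: "E (r * s) = E r * E s"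
proof -
  obtain a b c d where "b \<noteq> 0" "r = Fract a b" "d \<noteq> 0" "s = Fract c d"
    by (cases r, cases s) auto
  then show ?thesis
    by (simp add: E_Fract)
qed

lemma D_add [simp]: "D (r + s) = D r + D s"
proof -
  obtain a b c d where "b \<noteq> 0" "r = Fract a b" "d \<noteq> 0" "s = Fract c d"
    by (cases r, cases s) auto
  moreover have "pval b \<noteq> 0" "pval d \<noteq> 0"
    using calculation pval_nonzero by auto
  ultimately show ?thesis
    by (simp add: D_Fract pderiv_add pderiv_mult add_divide_distrib diff_divide_distrib)
      (simp add: field_simps power2_eq_square)
qed

lemma D_mult [simp]: "D (r * s) = D r * E s + E r * D s"
proof -
  obtain a b c d where "b \<noteq> 0" "r = Fract a b" "d \<noteq> 0" "s = Fract c d"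
    by (cases r, cases s) auto
  moreover have "pval b \<noteq> 0" "pval d \<noteq> 0"
    using calculation pval_nonzero by auto
  ultimately show ?thesis
    by (simp add: D_Fract E_Fract pderiv_mult) (simp add: field_simps power2_eq_square)
qed

lemma E_uminus [simp]: "E (- r) = - E r"
  using E_add[of r "- r"] by simp

lemma D_uminus [simp]: "D (- r) = - D r"
  using D_add[of r "- r"] by simp

lemma E_diff [simp]: "E (r - s) = E r - E s"
  using E_add[of r "- s"] by simp

lemma D_diff [simp]: "D (r - s) = D r - D s"
  using D_add[of r "- s"] by simp

lemma E_nonzero: "r \<noteq> 0 \<Longrightarrow> E r \<noteq> 0"
  by (cases r rule: Fract_cases_nonzero) (auto simp: E_Fract pval_nonzero)

lemma E_inverse [simp]: "E (inverse r) = inverse (E r)"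
proof (cases "r = 0")
  case False
  then have "E (inverse r) * E r = 1"
    using E_mult[of "inverse r" r] by simp
  then show ?thesis
    using E_nonzero[OF False] by (simp add: field_simps)
qed simp

lemma ratfun_fraction_positive_denominator:
  obtains f g where "g \<noteq> 0" "0 < pval g" "r = Fract f g"
proof -
  obtain f g where fg: "g \<noteq> 0" "r = Fract f g"
    by (cases r) auto
  show ?thesis
  proof (cases "0 < pval g")
    case False
    then have "0 < pval (- g)"
      using pval_nonzero[OF fg(1)] by simp
    with fg show ?thesis
      using that[of "- g" "- f"] by simp
  qed (use fg that in blast)
qed

text \<open>Since \<open>\<alpha>\<close> is transcendental, \<open>r'(\<alpha>) = 0\<close> forces \<open>p' q = p q'\<close> for the reduced
  fraction \<open>r = p/q\<close>; coprimality then gives \<open>q dvd q'\<close>, so \<open>q' = 0\<close>.\<close>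
lemma D_eq_0_imp_rconst:
  assumes "D r = 0"
  obtains c where "r = rconst c"
proof -
  define p where "p = fst (quot_of_fract r)"
  define q where "q = snd (quot_of_fract r)"
  have q0: "q \<noteq> 0" and r: "r = Fract p q" and "coprime q p"
    using coprime_quot_of_fract[of r] by (simp_all add: p_def q_def coprime_commute)
  have "pval q \<noteq> 0"
    using q0 pval_nonzero by blast
  with assms have "pval (pderiv p * q - p * pderiv q) = 0"
    by (simp add: r D_Fract q0)
  then have "pderiv p * q - p * pderiv q = 0"
    using pval_nonzero by blast
  then have cross: "pderiv p * q = p * pderiv q"
    by simp
  then have "q dvd p * pderiv q"
    by (metis dvd_triv_right)
  then have "q dvd pderiv q"
    using coprime_dvd_mult_right_iff[OF \<open>coprime q p\<close>] by simp
  then have "pderiv q = 0"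
    using dvd_imp_degree_le[of q "pderiv q"] degree_pderiv[of q] pderiv_eq_0_iff[of q] by force
  then have "pderiv p = 0"
    using cross q0 by simp
  then obtain c d where "p = [:c:]" "q = [:d:]"
    using \<open>pderiv q = 0\<close> by (metis degree_eq_zeroE pderiv_eq_0_iff)
  then have "r = rconst (c / d)"
    using q0 by (simp add: r rconst_def to_fract_def eq_fract mult_to_poly)
  then show ?thesis ..
qed

lemma E_ratfun_X [simp]: "E ratfun_X = \<alpha>"
  by (simp add: ratfun_X_def E_to_fract)

lemma D_ratfun_X [simp]: "D ratfun_X = 1"
  by (simp add: ratfun_X_def D_to_fract pderiv_pCons)

end

section \<open>Splitting the positive cone into two semirings\<close>

lemma of_nat_mult_mem_if_add_closed:
  fixes X :: "'a::semiring_1 set"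
  assumes "\<forall>x\<in>X. \<forall>y\<in>X. x + y \<in> X" "r \<in> X" "0 < n"
  shows "of_nat n * r \<in> X"
  using assms(3)
proof (induction n rule: nat_induct_non_zero)
  case (Suc n)
  then show ?case
    using assms(1,2) by (simp add: distrib_right)
qed (use assms(2) in simp)

lemma add_closed_partition_rescale:
  fixes X Y :: "'a::semiring_1 set"
  assumes "\<forall>x\<in>X. \<forall>y\<in>X. x + y \<in> X" "\<forall>x\<in>Y. \<forall>y\<in>Y. x + y \<in> Y" "X \<inter> Y = {}"
    and "r \<in> X" "s \<in> X \<union> Y" "0 < m" "0 < n" "of_nat n * s = of_nat m * r"
  shows "s \<in> X"
proof (rule ccontr)
  assume "s \<notin> X"
  then have "of_nat n * s \<in> Y"
    using assms(2,5,7) of_nat_mult_mem_if_add_closed by blast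
  moreover have "of_nat m * r \<in> X"
    using assms(1,4,6) of_nat_mult_mem_if_add_closed by blast
  ultimately show False
    using assms(3,8) by auto
qed

lemma pos_rat_as_ratio:
  fixes c :: rat
  assumes "0 < c"
  obtains m n :: nat where "0 < m" "0 < n" "c = of_nat m / of_nat n"
proof -
  obtain m n where mn: "quotient_of c = (m, n)"
    by (cases "quotient_of c")
  have "0 < n" "c = of_int m / of_int n"
    using quotient_of_denom_pos[OF mn] quotient_of_div[OF mn] by simp_all
  moreover from this have "0 < m"
    using assms by (simp add: zero_less_divide_iff)
  ultimately show ?thesis
    using that[of "nat m" "nat n"] by simp
qed

lemma rat_approx_from_side:
  fixes x e s :: real
  assumes "0 < e" "s \<noteq> 0"
  obtains q :: rat where "0 < s * (of_rat q - x)" "\<bar>of_rat q - x\<bar> < e"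
proof (cases "0 < s")
  case True
  obtain q where "x < of_rat q" "of_rat q < x + e"
    using of_rat_dense[of x "x + e"] assms(1) by auto
  then show ?thesis
    using True by (intro that[of q]) (auto simp: abs_less_iff)
next
  case False
  obtain q where "x - e < of_rat q" "of_rat q < x"
    using of_rat_dense[of "x - e" x] assms(1) by auto
  then show ?thesis
    using False assms(2) by (intro that[of q]) (auto simp: abs_less_iff mult_neg_neg)
qed

locale semiring_partition = transcendental_point +
  fixes A B :: "ratfun set"
  assumes partition: "A \<union> B = Qpos \<alpha>"
    and disjoint: "A \<inter> B = {}"
    and closed_A: "add_mult_closed A"
    and closed_B: "add_mult_closed B"
    and one_in_A: "1 \<in> A"
begin

lemma A_pos: "r \<in> A \<Longrightarrow> 0 < E r"
  and B_pos: "r \<in> B \<Longrightarrow> 0 < E r"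
  using partition by (auto simp: Qpos_def)

lemma in_A_iff_not_in_B: "0 < E r \<Longrightarrow> r \<in> A \<longleftrightarrow> r \<notin> B"
  using partition disjoint by (auto simp: Qpos_def)

lemma A_add: "r \<in> A \<Longrightarrow> s \<in> A \<Longrightarrow> r + s \<in> A"
  and A_mult: "r \<in> A \<Longrightarrow> s \<in> A \<Longrightarrow> r * s \<in> A"
  and B_add: "r \<in> B \<Longrightarrow> s \<in> B \<Longrightarrow> r + s \<in> B"
  and B_mult: "r \<in> B \<Longrightarrow> s \<in> B \<Longrightarrow> r * s \<in> B"
  using closed_A closed_B by (auto simp: add_mult_closed_def)

lemma rconst_mult_mem_part:
  assumes "X = A \<and> Y = B \<or> X = B \<and> Y = A" "r \<in> X" "0 < c"
  shows "rconst c * r \<in> X"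
proof -
  obtain m n :: nat where mn: "0 < m" "0 < n" "c = of_nat m / of_nat n"
    using pos_rat_as_ratio[OF assms(3)] .
  have "of_nat n * (rconst c * r) = of_nat m * r"
    using mn by (simp flip: rconst_of_nat mult.assoc rconst_mult)
  moreover have "rconst c * r \<in> X \<union> Y"
    using assms A_pos B_pos partition by (auto simp: Qpos_def zero_less_mult_iff)
  ultimately show ?thesis
    using assms(1,2) mn(1,2) add_closed_partition_rescale[of X Y r "rconst c * r" m n]
      disjoint A_add B_add by blast
qed

lemma rconst_mult_mem_A: "r \<in> A \<Longrightarrow> 0 < c \<Longrightarrow> rconst c * r \<in> A"
  and rconst_mult_mem_B: "r \<in> B \<Longrightarrow> 0 < c \<Longrightarrow> rconst c * r \<in> B"
  using rconst_mult_mem_part by blast+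

lemma rconst_in_A: "0 < c \<Longrightarrow> rconst c \<in> A"
  using rconst_mult_mem_A[OF one_in_A] by simp

text \<open>If \<open>r + c\<close> were in \<open>A\<close>, pick a rational \<open>e\<close> with \<open>c < e < r(\<alpha>)\<close>: the two sides of
  \<open>(r - e)\<^sup>2 + 2(c + e) r = (r + c)\<^sup>2 + (e\<^sup>2 - c\<^sup>2)\<close> would lie in \<open>B\<close> and in \<open>A\<close>.\<close>
lemma B_add_small_rconst:
  assumes r: "r \<in> B" and c: "0 < c" "of_rat c < E r"
  shows "r + rconst c \<in> B"
proof (rule ccontr)
  assume "r + rconst c \<notin> B"
  moreover have "0 < E (r + rconst c)"
    using B_pos[OF r] c(1) by (simp add: add_pos_pos)
  ultimately have rc: "r + rconst c \<in> A"
    using in_A_iff_not_in_B by blast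
  obtain e where e: "(of_rat c :: real) < of_rat e" "of_rat e < E r"
    using of_rat_dense[OF c(2)] by blast
  then have "c < e"
    by (simp add: of_rat_less)
  have "r - rconst e \<in> B"
  proof (rule ccontr)
    assume "r - rconst e \<notin> B"
    then have "r - rconst e \<in> A"
      using in_A_iff_not_in_B e(2) by simp
    then have "(r - rconst e) + rconst e \<in> A"
      using A_add rconst_in_A c(1) \<open>c < e\<close> by (metis order.strict_trans)
    then show False
      using r in_A_iff_not_in_B B_pos by auto
  qed
  then have "(r - rconst e) * (r - rconst e) + rconst (2 * (c + e)) * r \<in> B"
    using B_add B_mult rconst_mult_mem_B[OF r] c(1) \<open>c < e\<close> by simp
  moreover have "(r + rconst c) * (r + rconst c) + rconst (e * e - c * c) \<in> A"
    using A_add A_mult rc rconst_in_A c(1) \<open>c < e\<close> by (simp add: mult_strict_mono)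
  moreover have "(r - rconst e) * (r - rconst e) + rconst (2 * (c + e)) * r
      = (r + rconst c) * (r + rconst c) + rconst (e * e - c * c)"
    by (simp add: rconst_add rconst_mult rconst_diff algebra_simps)
  ultimately show False
    using in_A_iff_not_in_B B_pos by metis
qed

lemma B_add_pos_rconst:
  assumes r: "r \<in> B" and c: "0 < c"
  shows "r + rconst c \<in> B"
proof -
  obtain n :: nat where n: "of_rat c / E r < of_nat n"
    using reals_Archimedean2 by blast
  moreover have "0 < of_rat c / E r"
    using c B_pos[OF r] by simp
  ultimately have "0 < n"
    by (cases n) auto
  define d where "d = c / of_nat n"
  have d: "0 < d" "of_rat d < E r"
    using c n \<open>0 < n\<close> B_pos[OF r] by (simp_all add: d_def of_rat_divide field_simps)
  have "r + rconst (of_nat k * d) \<in> B" for k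
  proof (induction k)
    case (Suc k)
    have "0 \<le> real k * of_rat d"
      using d(1) by simp
    then have "of_rat d < E (r + rconst (of_nat k * d))"
      using d(2) by (simp add: of_rat_mult)
    then have "r + rconst (of_nat k * d) + rconst d \<in> B"
      using B_add_small_rconst[OF Suc d(1)] by blast
    moreover have "of_nat (Suc k) * d = of_nat k * d + d"
      by (simp add: algebra_simps)
    ultimately show ?case
      by (simp only: rconst_add add.assoc)
  qed (use r in simp)
  from this[of n] show ?thesis
    using \<open>0 < n\<close> by (simp add: d_def)
qed

lemma B_add_rconst:
  assumes r: "r \<in> B" and pos: "0 < E (r + rconst c)"
  shows "r + rconst c \<in> B"
proof (cases "0 < c")
  case False
  show ?thesis
  proof (rule ccontr)
    assume "r + rconst c \<notin> B"
    then have "r + rconst c \<in> A"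
      using in_A_iff_not_in_B pos by blast
    then have "r + rconst c + rconst (- c) \<in> A"
      using False A_add rconst_in_A by (cases "c = 0") auto
    then show False
      using r in_A_iff_not_in_B B_pos by (auto simp: rconst_uminus)
  qed
qed (use B_add_pos_rconst r in blast)

definition in_B_mod_const :: "ratfun \<Rightarrow> bool" where
  "in_B_mod_const r \<longleftrightarrow> (\<exists>c. 0 < E (r + rconst c) \<and> r + rconst c \<in> B)"

lemma exists_rconst_shift_pos:
  obtains c where "0 < E (r + rconst c)"
proof -
  obtain c where "- E r < of_rat c"
    using of_rat_dense[of "- E r" "- E r + 1"] by auto
  then show ?thesis
    using that[of c] by simp
qed

lemma in_B_mod_const_iff:
  assumes "0 < E (r + rconst c)"
  shows "in_B_mod_const r \<longleftrightarrow> r + rconst c \<in> B"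
proof
  assume "in_B_mod_const r"
  then obtain d where "r + rconst d \<in> B"
    by (auto simp: in_B_mod_const_def)
  moreover have "r + rconst d + rconst (c - d) = r + rconst c"
    by (simp add: rconst_diff)
  ultimately show "r + rconst c \<in> B"
    using B_add_rconst assms by metis
qed (use assms in \<open>auto simp: in_B_mod_const_def\<close>)

lemma not_in_B_mod_const_iff:
  "0 < E (r + rconst c) \<Longrightarrow> \<not> in_B_mod_const r \<longleftrightarrow> r + rconst c \<in> A"
  using in_B_mod_const_iff in_A_iff_not_in_B by blast

lemma in_B_mod_const_iff_mem: "0 < E r \<Longrightarrow> in_B_mod_const r \<longleftrightarrow> r \<in> B"
  and not_in_B_mod_const_iff_mem: "0 < E r \<Longrightarrow> \<not> in_B_mod_const r \<longleftrightarrow> r \<in> A"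
  using in_B_mod_const_iff[of r 0] not_in_B_mod_const_iff[of r 0] by simp_all

lemma in_B_mod_const_add_rconst [simp]:
  "in_B_mod_const (r + rconst c) \<longleftrightarrow> in_B_mod_const r"
proof -
  obtain e where e: "0 < E (r + rconst e)"
    using exists_rconst_shift_pos by blast
  have eq: "r + rconst c + rconst (e - c) = r + rconst e"
    by (simp add: rconst_diff)
  have "in_B_mod_const (r + rconst c) \<longleftrightarrow> r + rconst c + rconst (e - c) \<in> B"
    by (rule in_B_mod_const_iff) (simp only: eq e)
  also have "\<dots> \<longleftrightarrow> in_B_mod_const r"
    using in_B_mod_const_iff[OF e] by (simp only: eq)
  finally show ?thesis .
qed

lemma in_B_mod_const_add:
  assumes "in_B_mod_const r" "in_B_mod_const s"
  shows "in_B_mod_const (r + s)"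
proof -
  obtain c d where "r + rconst c \<in> B" "s + rconst d \<in> B"
    using assms by (auto simp: in_B_mod_const_def)
  then have "(r + rconst c) + (s + rconst d) \<in> B"
    using B_add by blast
  moreover have "(r + rconst c) + (s + rconst d) = (r + s) + rconst (c + d)"
    by (simp add: rconst_add ac_simps)
  ultimately have "(r + s) + rconst (c + d) \<in> B"
    by simp
  then have "in_B_mod_const ((r + s) + rconst (c + d))"
    using in_B_mod_const_iff_mem B_pos by blast
  then show ?thesis
    by simp
qed

lemma not_in_B_mod_const_add:
  assumes "\<not> in_B_mod_const r" "\<not> in_B_mod_const s"
  shows "\<not> in_B_mod_const (r + s)"
proof -
  obtain c d where "0 < E (r + rconst c)" "0 < E (s + rconst d)"
    using exists_rconst_shift_pos by metis
  then have "r + rconst c \<in> A" "s + rconst d \<in> A"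
    using assms not_in_B_mod_const_iff by blast+
  then have "(r + rconst c) + (s + rconst d) \<in> A"
    using A_add by blast
  moreover have "(r + rconst c) + (s + rconst d) = (r + s) + rconst (c + d)"
    by (simp add: rconst_add ac_simps)
  ultimately have "(r + s) + rconst (c + d) \<in> A"
    by simp
  then show ?thesis
    using A_pos not_in_B_mod_const_iff by blast
qed

lemma in_B_mod_const_rconst_mult:
  assumes "0 < c"
  shows "in_B_mod_const (rconst c * r) \<longleftrightarrow> in_B_mod_const r"
proof -
  obtain d where d: "0 < E (r + rconst d)"
    using exists_rconst_shift_pos by blast
  have eq: "rconst c * (r + rconst d) = rconst c * r + rconst (c * d)"
    by (simp add: rconst_mult algebra_simps)
  have "0 < E (rconst c * r + rconst (c * d))"
    using d assms by (simp flip: eq)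
  then have "in_B_mod_const (rconst c * r) \<longleftrightarrow> rconst c * (r + rconst d) \<in> B"
    using in_B_mod_const_iff eq by simp
  also have "\<dots> \<longleftrightarrow> r + rconst d \<in> B"
  proof
    assume "rconst c * (r + rconst d) \<in> B"
    then have "rconst (inverse c) * (rconst c * (r + rconst d)) \<in> B"
      using rconst_mult_mem_B assms by simp
    then show "r + rconst d \<in> B"
      using assms by (simp add: mult.assoc[symmetric] flip: rconst_mult)
  qed (rule rconst_mult_mem_B[OF _ assms])
  also have "\<dots> \<longleftrightarrow> in_B_mod_const r"
    using in_B_mod_const_iff d by simp
  finally show ?thesis .
qed

lemma not_in_B_mod_const_rconst: "\<not> in_B_mod_const (rconst c)"
proof -
  have "\<not> in_B_mod_const 1"
    using one_in_A not_in_B_mod_const_iff_mem[of 1] by simp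
  moreover have "1 + rconst (c - 1) = rconst c"
    by (simp add: rconst_diff)
  ultimately show ?thesis
    using in_B_mod_const_add_rconst[of 1 "c - 1"] by simp
qed

lemma in_B_mod_const_uminus:
  assumes "in_B_mod_const r"
  shows "\<not> in_B_mod_const (- r)"
  using in_B_mod_const_add[OF assms, of "- r"] not_in_B_mod_const_rconst[of 0] by auto

lemma in_B_mod_const_mult:
  assumes "in_B_mod_const U" "in_B_mod_const V" "0 < E (U + rconst a)" "0 < E (V + rconst b)"
  shows "in_B_mod_const (U * V + rconst b * U + rconst a * V)"
proof -
  have "U + rconst a \<in> B" "V + rconst b \<in> B"
    using assms in_B_mod_const_iff by simp_all
  then have "(U + rconst a) * (V + rconst b) \<in> B"
    by (rule B_mult)
  also have "(U + rconst a) * (V + rconst b)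
      = (U * V + rconst b * U + rconst a * V) + rconst (a * b)"
    by (simp add: rconst_mult algebra_simps)
  finally have "in_B_mod_const ((U * V + rconst b * U + rconst a * V) + rconst (a * b))"
    using in_B_mod_const_iff_mem B_pos by blast
  then show ?thesis
    by simp
qed

lemma not_in_B_mod_const_mult:
  assumes "\<not> in_B_mod_const U" "\<not> in_B_mod_const V" "0 < E (U + rconst a)" "0 < E (V + rconst b)"
  shows "\<not> in_B_mod_const (U * V + rconst b * U + rconst a * V)"
proof -
  have "U + rconst a \<in> A" "V + rconst b \<in> A"
    using assms not_in_B_mod_const_iff by simp_all
  then have "(U + rconst a) * (V + rconst b) \<in> A"
    by (rule A_mult)
  also have "(U + rconst a) * (V + rconst b)
      = (U * V + rconst b * U + rconst a * V) + rconst (a * b)"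
    by (simp add: rconst_mult algebra_simps)
  finally have "\<not> in_B_mod_const ((U * V + rconst b * U + rconst a * V) + rconst (a * b))"
    using not_in_B_mod_const_iff_mem A_pos by blast
  then show ?thesis
    by simp
qed

text \<open>For the right sign \<open>t = \<plusminus>1\<close> this will hold for every \<open>r\<close>.\<close>
definition follows_sign :: "real \<Rightarrow> ratfun \<Rightarrow> bool" where
  "follows_sign t r \<longleftrightarrow> (0 < t * D r \<longrightarrow> in_B_mod_const r) \<and> (t * D r < 0 \<longrightarrow> in_B_mod_const (- r))"

lemma follows_sign_uminus [simp]: "follows_sign t (- r) \<longleftrightarrow> follows_sign t r"
  by (auto simp: follows_sign_def)

lemma follows_sign_rconst: "follows_sign t (rconst c)"
  by (simp add: follows_sign_def)

lemma follows_sign_add_rconst [simp]: "follows_sign t (r + rconst c) \<longleftrightarrow> follows_sign t r"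
  using in_B_mod_const_add_rconst[of "- r" "- c"] by (simp add: follows_sign_def rconst_uminus)

lemma follows_sign_rconst_mult:
  assumes "0 < c"
  shows "follows_sign t (rconst c * r) \<longleftrightarrow> follows_sign t r"
  using assms in_B_mod_const_rconst_mult[OF assms, of "- r"]
  by (simp add: follows_sign_def in_B_mod_const_rconst_mult zero_less_mult_iff mult_less_0_iff)

lemma follows_sign_linear:
  assumes "follows_sign t y"
  shows "follows_sign t (rconst a + rconst b * y)"
proof -
  have "follows_sign t (rconst b * y)"
  proof (cases b "0 :: rat" rule: linorder_cases)
    case less
    then have "follows_sign t (rconst (- b) * - y)"
      using assms follows_sign_rconst_mult by simp
    then show ?thesis
      by (simp add: rconst_uminus)
  qed (use assms follows_sign_rconst_mult follows_sign_rconst[of t 0] in simp_all)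
  then show ?thesis
    using follows_sign_add_rconst by (metis add.commute)
qed

lemma in_B_mod_const_if_follows_sign:
  assumes "follows_sign t r" "t * D r \<noteq> 0"
  shows "in_B_mod_const r \<or> in_B_mod_const (- r)"
  using assms by (auto simp: follows_sign_def neq_iff)

text \<open>Since \<open>D (W - b U - a V) = D (U V + W) - (b + V(\<alpha>)) D U - (a + U(\<alpha>)) D V\<close>, shifts \<open>a, b\<close>
  close enough to \<open>-U(\<alpha>), -V(\<alpha>)\<close> keep the sign of \<open>D (U V + W)\<close>.\<close>
lemma exists_rconst_shifts:
  assumes pos: "0 < t * D (U * V + W)" and "s1 \<noteq> 0" "s2 \<noteq> 0"
  obtains a b where "0 < s1 * E (U + rconst a)" "0 < s2 * E (V + rconst b)"
    "0 < t * D (W - rconst b * U - rconst a * V)"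
proof -
  define M where "M = t * D (U * V + W)"
  define K where "K = \<bar>t * D U\<bar> + \<bar>t * D V\<bar>"
  define e where "e = M / (2 * (K + 1))"
  have "0 < M" "0 \<le> K"
    using pos by (simp_all add: M_def K_def)
  then have "0 < e" "e * K < M"
    unfolding e_def by (simp_all add: field_simps) (intro add_nonneg_pos; simp)
  obtain a where a: "0 < s1 * (of_rat a - - E U)" "\<bar>of_rat a - - E U\<bar> < e"
    using rat_approx_from_side[OF \<open>0 < e\<close> \<open>s1 \<noteq> 0\<close>] by blast
  obtain b where b: "0 < s2 * (of_rat b - - E V)" "\<bar>of_rat b - - E V\<bar> < e"
    using rat_approx_from_side[OF \<open>0 < e\<close> \<open>s2 \<noteq> 0\<close>] by blast
  have "\<bar>(of_rat b + E V) * (t * D U)\<bar> + \<bar>(of_rat a + E U) * (t * D V)\<bar> \<le> e * K"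
    using a(2) b(2) by (simp add: K_def abs_mult distrib_left add_mono mult_right_mono)
  then have "0 < M - (of_rat b + E V) * (t * D U) - (of_rat a + E U) * (t * D V)"
    using \<open>e * K < M\<close> by linarith
  also have "\<dots> = t * D (W - rconst b * U - rconst a * V)"
    by (simp add: M_def algebra_simps)
  finally show ?thesis
    using a(1) b(1) by (auto intro!: that[of a b] simp: add.commute)
qed

lemma in_B_mod_const_mult_add_if_left:
  assumes H: "\<And>a b c. follows_sign t (rconst c * W + rconst b * U + rconst a * V)"
    and U: "in_B_mod_const U" and V: "D V \<noteq> 0" and M: "0 < t * D (U * V + W)"
  shows "in_B_mod_const (U * V + W)"
proof -
  have W: "follows_sign t (W - rconst b * U - rconst a * V)" for a b
    using H[where a="- a" and b="- b" and c=1] by (simp add: rconst_uminus)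
  have "follows_sign t V"
    using H[where a=1 and b=0 and c=0] by simp
  moreover have "t \<noteq> 0"
    using M by auto
  ultimately have "in_B_mod_const V \<or> in_B_mod_const (- V)"
    using in_B_mod_const_if_follows_sign V by simp
  then show ?thesis
  proof
    assume "in_B_mod_const V"
    obtain a b where ab: "0 < 1 * E (U + rconst a)" "0 < 1 * E (V + rconst b)"
      "0 < t * D (W - rconst b * U - rconst a * V)"
      using exists_rconst_shifts[OF M, of 1 1] by auto
    have "in_B_mod_const (U * V + rconst b * U + rconst a * V)"
      using in_B_mod_const_mult U \<open>in_B_mod_const V\<close> ab by simp
    moreover have "in_B_mod_const (W - rconst b * U - rconst a * V)"
      using W ab(3) by (simp add: follows_sign_def)
    ultimately have
      "in_B_mod_const ((U * V + rconst b * U + rconst a * V) + (W - rconst b * U - rconst a * V))"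
      by (rule in_B_mod_const_add)
    then show ?thesis
      by (simp add: algebra_simps)
  next
    assume "in_B_mod_const (- V)"
    obtain a b where ab: "0 < - 1 * E (U + rconst a)" "0 < 1 * E (V + rconst b)"
      "0 < t * D (W - rconst b * U - rconst a * V)"
      using exists_rconst_shifts[OF M, of "- 1" 1] by auto
    text \<open>Here \<open>- U - a\<close> and \<open>V + b\<close> lie in \<open>A\<close>.\<close>
    have "\<not> in_B_mod_const ((- U) * V + rconst b * (- U) + rconst (- a) * V)"
      using not_in_B_mod_const_mult[of "- U" V "- a" b] ab(1,2)
        in_B_mod_const_uminus[OF U] in_B_mod_const_uminus[OF \<open>in_B_mod_const (- V)\<close>]
      by (simp add: rconst_uminus of_rat_minus)
    moreover have "in_B_mod_const (W - rconst b * U - rconst a * V)"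
      using W ab(3) by (simp add: follows_sign_def)
    moreover have "(U * V + W) + ((- U) * V + rconst b * (- U) + rconst (- a) * V)
        = W - rconst b * U - rconst a * V"
      by (simp add: rconst_uminus algebra_simps)
    ultimately show ?thesis
      using not_in_B_mod_const_add by metis
  qed
qed

lemma in_B_mod_const_mult_add:
  assumes H: "\<And>a b c. follows_sign t (rconst c * W + rconst b * U + rconst a * V)"
    and M: "0 < t * D (U * V + W)"
  shows "in_B_mod_const (U * V + W)"
proof (cases "D U = 0 \<or> D V = 0")
  case True
  then obtain a b where "U * V + W = rconst 1 * W + rconst b * U + rconst a * V"
  proof
    assume "D U = 0"
    then obtain u where "U = rconst u"
      by (rule D_eq_0_imp_rconst)
    then show ?thesis
      using that[where a=u and b=0] by (simp add: mult.commute)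
  next
    assume "D V = 0"
    then obtain v where "V = rconst v"
      by (rule D_eq_0_imp_rconst)
    then show ?thesis
      using that[where a=0 and b=v] by (simp add: mult.commute)
  qed
  then have "follows_sign t (U * V + W)"
    using H[where a=a and b=b and c=1] by (simp only: rconst_1 mult_1_left)
  then show ?thesis
    using M by (simp add: follows_sign_def)
next
  case False
  have "follows_sign t U"
    using H[where a=0 and b=1 and c=0] by simp
  moreover have "t \<noteq> 0"
    using M by auto
  ultimately have "in_B_mod_const U \<or> in_B_mod_const (- U)"
    using in_B_mod_const_if_follows_sign False by simp
  then show ?thesis
  proof
    assume "in_B_mod_const U"
    then show ?thesis
      using in_B_mod_const_mult_add_if_left H False M by blast
  next
    assume "in_B_mod_const (- U)"
    have "follows_sign t (rconst c * W + rconst b * (- U) + rconst a * (- V))" for a b c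
      using H[where a="- a" and b="- b" and c=c] by (simp add: rconst_uminus)
    then have "in_B_mod_const ((- U) * (- V) + W)"
      using \<open>in_B_mod_const (- U)\<close>
      by (rule in_B_mod_const_mult_add_if_left) (use False M in simp_all)
    then show ?thesis
      by simp
  qed
qed

lemma follows_sign_mult_add:
  assumes H: "\<And>a b c. follows_sign t (rconst c * W + rconst b * U + rconst a * V)"
  shows "follows_sign t (U * V + W)"
proof -
  have "in_B_mod_const (U * (- V) + (- W))" if "t * D (U * V + W) < 0"
  proof (rule in_B_mod_const_mult_add)
    fix a b c
    have "rconst c * (- W) + rconst b * U + rconst a * (- V)
        = - (rconst c * W + rconst (- b) * U + rconst a * V)"
      by (simp add: rconst_uminus)
    then show "follows_sign t (rconst c * (- W) + rconst b * U + rconst a * (- V))"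
      using H[where a=a and b="- b" and c=c] by (simp only: follows_sign_uminus)
  qed (use that in \<open>simp add: algebra_simps\<close>)
  then show ?thesis
    using in_B_mod_const_mult_add[OF H] by (auto simp: follows_sign_def)
qed

lemma follows_sign_poly:
  assumes "follows_sign t y"
  shows "follows_sign t (poly_ratfun p y)"
  using follows_sign_linear[OF assms] follows_sign_mult_add by (rule poly_ratfun_induct)

lemma not_in_B_mod_const_linear:
  assumes "\<not> in_B_mod_const y" "\<not> in_B_mod_const (- y)"
  shows "\<not> in_B_mod_const (rconst a + rconst b * y)"
proof -
  have "\<not> in_B_mod_const (rconst b * y)"
  proof (cases b "0 :: rat" rule: linorder_cases)
    case less
    then have "\<not> in_B_mod_const (rconst (- b) * - y)"
      using assms in_B_mod_const_rconst_mult[of "- b" "- y"] by simp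
    then show ?thesis
      by (simp add: rconst_uminus)
  qed (use assms in_B_mod_const_rconst_mult not_in_B_mod_const_rconst[of 0] in simp_all)
  then show ?thesis
    using in_B_mod_const_add_rconst by (metis add.commute)
qed

lemma not_in_B_mod_const_mult_add:
  assumes H: "\<And>a b c. \<not> in_B_mod_const (rconst c * W + rconst b * U + rconst a * V)"
  shows "\<not> in_B_mod_const (U * V + W)"
proof -
  obtain a b where ab: "0 < E (U + rconst a)" "0 < E (V + rconst b)"
    using exists_rconst_shift_pos by metis
  have "\<not> in_B_mod_const U" "\<not> in_B_mod_const V"
    using H[where a=0 and b=1 and c=0] H[where a=1 and b=0 and c=0] by simp_all
  then have "\<not> in_B_mod_const (U * V + rconst b * U + rconst a * V)"
    using not_in_B_mod_const_mult ab by blast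
  moreover have "\<not> in_B_mod_const (W - rconst b * U - rconst a * V)"
    using H[where a="- a" and b="- b" and c=1] by (simp add: rconst_uminus)
  ultimately have
    "\<not> in_B_mod_const ((U * V + rconst b * U + rconst a * V) + (W - rconst b * U - rconst a * V))"
    by (rule not_in_B_mod_const_add)
  then show ?thesis
    by (simp add: algebra_simps)
qed

lemma not_in_B_mod_const_poly:
  assumes "\<not> in_B_mod_const y" "\<not> in_B_mod_const (- y)"
  shows "\<not> in_B_mod_const (poly_ratfun p y)"
  using not_in_B_mod_const_linear[OF assms] not_in_B_mod_const_mult_add
  by (rule poly_ratfun_induct[where Q="\<lambda>r. \<not> in_B_mod_const r"])

text \<open>\<open>G = g\<^sup>2 s (y - q)\<close> with \<open>s = \<plusminus>1\<close>: choosing \<open>q\<close> close to \<open>y(\<alpha>)\<close> makes \<open>G(\<alpha>)\<close>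
  small and positive, so that the sign of \<open>G'(\<alpha>)\<close> is that of \<open>g(\<alpha>)\<^sup>2 s y'(\<alpha>)\<close>.\<close>
lemma exists_factor_with_negative_slope:
  assumes g: "E g \<noteq> 0" and y: "D y \<noteq> 0" and t: "t \<noteq> 0"
  obtains s q where "0 < E (g * g * (rconst s * (y - rconst q)))"
    "t * D (g * g * (rconst s * (y - rconst q))) < 0"
proof -
  define s :: rat where "s = (if 0 < t * D y then - 1 else 1)"
  define K where "K = (E g)\<^sup>2 * \<bar>t * D y\<bar>"
  define L where "L = \<bar>2 * t * E g * D g\<bar>"
  define d where "d = K / (L + 1)"
  have "0 < K" "0 \<le> L"
    using g y t by (simp_all add: K_def L_def)
  then have "0 < d" "L * d < K"
    by (simp_all add: d_def field_simps)
  have "- of_rat s \<noteq> (0 :: real)"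
    by (simp add: s_def)
  then obtain q where q: "0 < - of_rat s * (of_rat q - E y)" "\<bar>of_rat q - E y\<bar> < d"
    by (rule rat_approx_from_side[OF \<open>0 < d\<close>])
  define e where "e = of_rat s * (E y - of_rat q)"
  have "0 < e" "e < d"
    using q by (auto simp: e_def s_def abs_if split: if_splits)
  have "0 < (E g)\<^sup>2 * e"
    using g \<open>0 < e\<close> by simp
  then have "0 < E (g * g * (rconst s * (y - rconst q)))"
    by (simp add: e_def power2_eq_square)
  moreover have "t * D (g * g * (rconst s * (y - rconst q)))
      = 2 * t * E g * D g * e + (E g)\<^sup>2 * (of_rat s * (t * D y))"
    by (simp add: e_def power2_eq_square algebra_simps)
  moreover have "of_rat s * (t * D y) = - \<bar>t * D y\<bar>"
    unfolding s_def by (cases "0 < t * D y") (simp_all add: of_rat_minus)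
  moreover have "2 * t * E g * D g * e \<le> L * d"
  proof -
    have "2 * t * E g * D g * e \<le> L * e"
      unfolding L_def using \<open>0 < e\<close> by (intro mult_right_mono) simp_all
    also have "\<dots> \<le> L * d"
      using \<open>0 \<le> L\<close> \<open>e < d\<close> by (simp add: mult_left_mono)
    finally show ?thesis .
  qed
  ultimately show ?thesis
    using that \<open>L * d < K\<close> by (simp add: K_def)
qed

lemma exists_rconst_shift_mult_pos:
  assumes pos: "0 < t * D T" and G: "0 < E G" "t * D G < 0"
  obtains c where "0 < E (T + rconst c)" "0 < t * D ((T + rconst c) * G)"
proof -
  define k where "k = t * D T * E G / - (t * D G)"
  have "0 < k"
    unfolding k_def using mult_pos_pos[OF pos G(1)] G(2) by (intro divide_pos_pos) simp_all
  then obtain c where c: "0 < 1 * (of_rat c - - E T)" "\<bar>of_rat c - - E T\<bar> < k"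
    using rat_approx_from_side[OF \<open>0 < k\<close>, of 1 "- E T"] by auto
  then have "(E T + of_rat c) * - (t * D G) < k * - (t * D G)"
    using G(2) by (intro mult_strict_right_mono) (simp_all add: abs_less_iff)
  also have "\<dots> = t * D T * E G"
    unfolding k_def using G(2) by (cases "t = 0 \<or> D G = 0") auto
  finally have "0 < t * D ((T + rconst c) * G)"
    by (simp add: algebra_simps)
  then show ?thesis
    using that c(1) by (simp add: add.commute)
qed

text \<open>If \<open>t T'(\<alpha>) > 0\<close> but \<open>T + c \<in> A\<close>, multiply by a \<open>G \<in> A\<close> as above with \<open>t G'(\<alpha>) < 0\<close>:
  for suitable \<open>c\<close>, \<open>(T + c) G\<close> is a polynomial in \<open>y\<close> lying in \<open>A\<close> with \<open>t ((T + c) G)'(\<alpha>) > 0\<close>.\<close>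
lemma in_B_mod_const_if_mult_poly:
  assumes polys: "\<And>p. follows_sign t (poly_ratfun p y)" and y: "D y \<noteq> 0"
    and T: "T * poly_ratfun g y = poly_ratfun f y" and g: "E (poly_ratfun g y) \<noteq> 0"
    and pos: "0 < t * D T"
  shows "in_B_mod_const T"
proof (rule ccontr)
  assume "\<not> in_B_mod_const T"
  have "t \<noteq> 0"
    using pos by auto
  obtain s q where G: "0 < E (poly_ratfun g y * poly_ratfun g y * (rconst s * (y - rconst q)))"
    "t * D (poly_ratfun g y * poly_ratfun g y * (rconst s * (y - rconst q))) < 0"
    using exists_factor_with_negative_slope[OF g y \<open>t \<noteq> 0\<close>] by blast
  define m where "m = g * smult s [:- q, 1:]"
  define l where "l = g * m"
  define G where "G = poly_ratfun l y"
  have "G = poly_ratfun g y * poly_ratfun g y * (rconst s * (y - rconst q))"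
    unfolding G_def l_def m_def
    by (simp only: poly_ratfun_mult poly_ratfun_smult poly_ratfun_pCons poly_ratfun_0)
      (simp add: rconst_uminus)
  with G have G: "0 < E G" "t * D G < 0"
    by simp_all
  have "in_B_mod_const (- G)"
    using polys G(2) by (simp add: G_def follows_sign_def)
  then have "G \<in> A"
    using in_B_mod_const_uminus not_in_B_mod_const_iff_mem[OF G(1)] by fastforce
  obtain c where c: "0 < E (T + rconst c)" "0 < t * D ((T + rconst c) * G)"
    using exists_rconst_shift_mult_pos[OF pos G] by blast
  have "(T + rconst c) * G = poly_ratfun (f * m + smult c l) y"
    by (simp add: G_def l_def algebra_simps flip: T)
  then have "follows_sign t ((T + rconst c) * G)"
    by (simp only: polys)
  with c(2) have "in_B_mod_const ((T + rconst c) * G)"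
    unfolding follows_sign_def by blast
  moreover have "T + rconst c \<in> A"
    using \<open>\<not> in_B_mod_const T\<close> not_in_B_mod_const_iff[OF c(1)] by simp
  then have "(T + rconst c) * G \<in> A"
    using A_mult \<open>G \<in> A\<close> by blast
  ultimately show False
    using not_in_B_mod_const_iff_mem A_pos by blast
qed

lemma follows_sign_if_mult_poly:
  assumes "\<And>p. follows_sign t (poly_ratfun p y)" "D y \<noteq> 0"
    and "T * poly_ratfun g y = poly_ratfun f y" "E (poly_ratfun g y) \<noteq> 0"
  shows "follows_sign t T"
  using in_B_mod_const_if_mult_poly[OF assms]
    in_B_mod_const_if_mult_poly[OF assms(1,2), of "- T" g "- f"] assms(3,4)
  unfolding follows_sign_def by auto

text \<open>Write some \<open>r \<in> B\<close> as \<open>f/g\<close> with \<open>g(\<alpha>) > 0\<close>; as \<open>f \<in> A\<close>, the factor \<open>1/g\<close> of \<open>r\<close>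
  must lie in \<open>B\<close>.\<close>
lemma exists_poly_inverse_in_B:
  assumes "B \<noteq> {}" and polys: "\<And>p. \<not> in_B_mod_const (to_fract p)"
  obtains g where "g \<noteq> 0" "inverse (to_fract g) \<in> B"
proof -
  obtain r where "r \<in> B"
    using assms by blast
  obtain f g where fg: "g \<noteq> 0" "0 < pval g" "r = Fract f g"
    by (rule ratfun_fraction_positive_denominator)
  define z where "z = inverse (to_fract g)"
  have r: "r = to_fract f * z"
    using fg(1) by (simp add: z_def fg(3) to_fract_def divide_fract eq_fract)
  have "0 < E z"
    using fg(2) by (simp add: z_def E_to_fract)
  have "0 < E (to_fract f)"
    using B_pos[OF \<open>r \<in> B\<close>] \<open>0 < E z\<close> by (simp add: r zero_less_mult_iff)
  then have "to_fract f \<in> A"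
    using polys not_in_B_mod_const_iff_mem by blast
  have "z \<in> B"
  proof (rule ccontr)
    assume "z \<notin> B"
    then have "r \<in> A"
      using \<open>to_fract f \<in> A\<close> A_mult in_A_iff_not_in_B[OF \<open>0 < E z\<close>] by (simp add: r)
    then show False
      using \<open>r \<in> B\<close> in_A_iff_not_in_B B_pos by blast
  qed
  then show ?thesis
    using that fg(1) by (simp add: z_def)
qed

text \<open>Otherwise no polynomial lies in \<open>B\<close> modulo constants, but for \<open>z = 1/g \<in> B\<close> as above and
  \<open>t = z'(\<alpha>)\<close> every polynomial in \<open>z\<close>, hence also \<open>g = 1/z\<close>, follows the sign \<open>t\<close>; this puts
  \<open>g\<close> or \<open>-g\<close> into \<open>B\<close> modulo constants.\<close>
lemma ratfun_X_in_B_mod_const: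
  assumes "B \<noteq> {}"
  shows "in_B_mod_const ratfun_X \<or> in_B_mod_const (- ratfun_X)"
proof (rule ccontr)
  assume "\<not> ?thesis"
  then have polys: "\<not> in_B_mod_const (to_fract p)" for p
    using not_in_B_mod_const_poly[of ratfun_X p] by (simp add: poly_ratfun_ratfun_X)
  obtain g where g: "g \<noteq> 0" "inverse (to_fract g) \<in> B"
    using exists_poly_inverse_in_B[OF assms polys] by blast
  define z where "z = inverse (to_fract g)"
  have "z \<in> B"
    using g(2) by (simp only: z_def)
  then have "0 < E z" "in_B_mod_const z"
    using B_pos in_B_mod_const_iff_mem by blast+
  then have "D z \<noteq> 0"
    using D_eq_0_imp_rconst not_in_B_mod_const_rconst by metis
  define t where "t = D z"
  have "follows_sign t z"
    using \<open>in_B_mod_const z\<close> by (simp add: follows_sign_def t_def)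
  then have "follows_sign t (poly_ratfun p z)" for p
    by (rule follows_sign_poly)
  moreover have "to_fract g * poly_ratfun [:0, 1:] z = poly_ratfun 1 z"
    using g(1) by (simp add: z_def)
  moreover have "E (poly_ratfun [:0, 1:] z) \<noteq> 0"
    using \<open>0 < E z\<close> by simp
  ultimately have "follows_sign t (to_fract g)"
    using follows_sign_if_mult_poly \<open>D z \<noteq> 0\<close> by blast
  moreover have "D (to_fract g) \<noteq> 0"
  proof
    assume "D (to_fract g) = 0"
    then obtain c where "to_fract g = rconst c"
      by (rule D_eq_0_imp_rconst)
    then have "z = rconst (inverse c)"
      by (simp add: z_def rconst_inverse)
    then show False
      using \<open>in_B_mod_const z\<close> not_in_B_mod_const_rconst by simp
  qed
  ultimately have "in_B_mod_const (to_fract g) \<or> in_B_mod_const (to_fract (- g))"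
    using in_B_mod_const_if_follows_sign \<open>D z \<noteq> 0\<close> by (simp add: t_def to_fract_uminus)
  then show False
    using polys by blast
qed

lemma exists_sign_followed:
  assumes "B \<noteq> {}"
  obtains t :: real where "t = 1 \<or> t = - 1" "\<And>r. follows_sign t r"
proof -
  obtain t :: real where t: "t = 1 \<or> t = - 1" and "follows_sign t ratfun_X"
  proof (cases "in_B_mod_const ratfun_X")
    case True
    then show ?thesis
      using that[of 1] by (simp add: follows_sign_def)
  next
    case False
    then show ?thesis
      using that[of "- 1"] ratfun_X_in_B_mod_const[OF assms] by (simp add: follows_sign_def)
  qed
  then have polys: "follows_sign t (poly_ratfun p ratfun_X)" for p
    using follows_sign_poly by blast
  have "follows_sign t r" for r
  proof -
    obtain f g where fg: "g \<noteq> 0" "0 < pval g" "r = Fract f g"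
      by (rule ratfun_fraction_positive_denominator)
    show ?thesis
    proof (rule follows_sign_if_mult_poly[OF polys])
      show "r * poly_ratfun g ratfun_X = poly_ratfun f ratfun_X"
        using fg(1) by (simp add: fg(3) poly_ratfun_ratfun_X to_fract_def eq_fract)
      show "E (poly_ratfun g ratfun_X) \<noteq> 0"
        using fg(2) by (simp add: poly_ratfun_ratfun_X E_to_fract)
    qed simp
  qed
  with t show ?thesis
    using that by blast
qed

lemma B_eq_if_follows_sign:
  assumes "\<And>r. follows_sign t r" "t \<noteq> 0"
  shows "B = {r. 0 < E r \<and> 0 < t * D r}"
proof (intro set_eqI iffI)
  fix r
  assume "r \<in> B"
  then have "0 < E r" "in_B_mod_const r"
    using B_pos in_B_mod_const_iff_mem by blast+
  moreover have "D r \<noteq> 0"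
    using \<open>in_B_mod_const r\<close> D_eq_0_imp_rconst not_in_B_mod_const_rconst by metis
  moreover have "\<not> t * D r < 0"
    using assms(1)[of r] in_B_mod_const_uminus[of "- r"] \<open>in_B_mod_const r\<close>
    by (auto simp: follows_sign_def)
  ultimately show "r \<in> {r. 0 < E r \<and> 0 < t * D r}"
    using assms(2) by (simp add: linorder_not_less le_less)
qed (use assms(1) in_B_mod_const_iff_mem in \<open>auto simp: follows_sign_def\<close>)

lemma partition_cases:
  assumes "B \<noteq> {}"
  shows "A = Hplus \<alpha> \<union> Hzero \<alpha> \<and> B = Hminus \<alpha> \<or> A = Hzero \<alpha> \<union> Hminus \<alpha> \<and> B = Hplus \<alpha>"
proof -
  obtain t :: real where t: "t = 1 \<or> t = - 1" "\<And>r. follows_sign t r"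
    using exists_sign_followed[OF assms] by blast
  then have "t \<noteq> 0"
    by auto
  have B: "B = {r. 0 < E r \<and> 0 < t * D r}"
    by (rule B_eq_if_follows_sign[OF t(2) \<open>t \<noteq> 0\<close>])
  have A: "A = {r. 0 < E r} - B"
    using partition disjoint by (auto simp: Qpos_def)
  from t(1) show ?thesis
  proof
    assume "t = 1"
    then have "B = Hplus \<alpha>" "A = Hzero \<alpha> \<union> Hminus \<alpha>"
      using A B by (auto simp: Qpos_def Hplus_def Hzero_def Hminus_def)
    then show ?thesis
      by blast
  next
    assume "t = - 1"
    then have "B = Hminus \<alpha>" "A = Hplus \<alpha> \<union> Hzero \<alpha>"
      using A B by (auto simp: Qpos_def Hplus_def Hzero_def Hminus_def)
    then show ?thesis
      by blast
  qed
qed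

end

section \<open>The classification\<close>

definition semiring_split :: "ratfun set \<Rightarrow> ratfun set \<Rightarrow> ratfun set \<Rightarrow> bool" where
  "semiring_split P A B \<longleftrightarrow> A \<union> B = P \<and> A \<inter> B = {} \<and> A \<noteq> {} \<and> B \<noteq> {}
                              \<and> add_mult_closed A \<and> add_mult_closed B"

lemma semiring_split_commute: "semiring_split P A B \<longleftrightarrow> semiring_split P B A"
  by (auto simp: semiring_split_def)

context transcendental_point
begin

lemma add_mult_closed_by_derivative_sign:
  assumes "\<And>x y. S x \<Longrightarrow> S y \<Longrightarrow> S (x + y)"
    and "\<And>x y a b. S x \<Longrightarrow> S y \<Longrightarrow> 0 < a \<Longrightarrow> 0 < b \<Longrightarrow> S (x * b + a * y)"
  shows "add_mult_closed {r. 0 < E r \<and> S (D r)}"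
  using assms by (auto simp: add_mult_closed_def)

lemma semiring_split_cases:
  assumes "semiring_split (Qpos \<alpha>) A B" "1 \<in> A"
  shows "A = Hplus \<alpha> \<union> Hzero \<alpha> \<and> B = Hminus \<alpha> \<or> A = Hzero \<alpha> \<union> Hminus \<alpha> \<and> B = Hplus \<alpha>"
proof -
  interpret semiring_partition \<alpha> A B
    using assms by unfold_locales (auto simp: semiring_split_def)
  show ?thesis
    using assms(1) partition_cases by (simp add: semiring_split_def)
qed

lemma semiring_split_by_derivative_sign:
  "semiring_split (Qpos \<alpha>) (Hplus \<alpha> \<union> Hzero \<alpha>) (Hminus \<alpha>)"
  "semiring_split (Qpos \<alpha>) (Hplus \<alpha>) (Hzero \<alpha> \<union> Hminus \<alpha>)"
proof -
  have H: "Hplus \<alpha> \<union> Hzero \<alpha> = {r. 0 < E r \<and> 0 \<le> D r}" "Hminus \<alpha> = {r. 0 < E r \<and> D r < 0}"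
    "Hplus \<alpha> = {r. 0 < E r \<and> 0 < D r}" "Hzero \<alpha> \<union> Hminus \<alpha> = {r. 0 < E r \<and> D r \<le> 0}"
    by (auto simp: Hplus_def Hzero_def Hminus_def Qpos_def)
  obtain q q' where "- \<alpha> < of_rat q" "\<alpha> < of_rat q'"
    using of_rat_dense[of "- \<alpha>" "- \<alpha> + 1"] of_rat_dense[of \<alpha> "\<alpha> + 1"] by auto
  then have "ratfun_X + rconst q \<in> {r. 0 < E r \<and> 0 < D r}"
    "rconst q' - ratfun_X \<in> {r. 0 < E r \<and> D r < 0}"
    by auto
  moreover have "1 \<in> {r. 0 < E r \<and> 0 \<le> D r}" "1 \<in> {r. 0 < E r \<and> D r \<le> 0}"
    by simp_all
  ultimately have nonempty: "{r. 0 < E r \<and> 0 < D r} \<noteq> {}" "{r. 0 < E r \<and> D r < 0} \<noteq> {}"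
    "{r. 0 < E r \<and> 0 \<le> D r} \<noteq> {}" "{r. 0 < E r \<and> D r \<le> 0} \<noteq> {}"
    by blast+
  have closed: "add_mult_closed {r. 0 < E r \<and> 0 \<le> D r}" "add_mult_closed {r. 0 < E r \<and> D r < 0}"
    "add_mult_closed {r. 0 < E r \<and> 0 < D r}" "add_mult_closed {r. 0 < E r \<and> D r \<le> 0}"
    by (intro add_mult_closed_by_derivative_sign;
        simp add: add_nonneg_nonneg add_pos_pos add_neg_neg add_nonpos_nonpos mult_nonneg_nonneg
          mult_pos_pos mult_neg_pos mult_pos_neg mult_nonpos_nonneg mult_nonneg_nonpos)+
  show "semiring_split (Qpos \<alpha>) (Hplus \<alpha> \<union> Hzero \<alpha>) (Hminus \<alpha>)"
    unfolding semiring_split_def H(1) H(2) using nonempty closed by (auto simp: Qpos_def)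
  show "semiring_split (Qpos \<alpha>) (Hplus \<alpha>) (Hzero \<alpha> \<union> Hminus \<alpha>)"
    unfolding semiring_split_def H(3) H(4) using nonempty closed by (auto simp: Qpos_def)
qed

lemma semiring_split_iff:
  "semiring_split (Qpos \<alpha>) A B \<longleftrightarrow>
     {A, B} = {Hplus \<alpha> \<union> Hzero \<alpha>, Hminus \<alpha>} \<or> {A, B} = {Hplus \<alpha>, Hzero \<alpha> \<union> Hminus \<alpha>}"
proof
  assume split: "semiring_split (Qpos \<alpha>) A B"
  then have "1 \<in> A \<union> B"
    by (simp add: semiring_split_def Qpos_def)
  then show "{A, B} = {Hplus \<alpha> \<union> Hzero \<alpha>, Hminus \<alpha>} \<or> {A, B} = {Hplus \<alpha>, Hzero \<alpha> \<union> Hminus \<alpha>}"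
  proof
    assume "1 \<in> A"
    with split have "A = Hplus \<alpha> \<union> Hzero \<alpha> \<and> B = Hminus \<alpha> \<or> A = Hzero \<alpha> \<union> Hminus \<alpha> \<and> B = Hplus \<alpha>"
      by (rule semiring_split_cases)
    then show ?thesis
      by auto
  next
    assume "1 \<in> B"
    with split have "B = Hplus \<alpha> \<union> Hzero \<alpha> \<and> A = Hminus \<alpha> \<or> B = Hzero \<alpha> \<union> Hminus \<alpha> \<and> A = Hplus \<alpha>"
      by (intro semiring_split_cases) (simp_all add: semiring_split_commute)
    then show ?thesis
      by (auto simp: insert_commute)
  qed
qed (use semiring_split_by_derivative_sign semiring_split_commute in \<open>auto simp: doubleton_eq_iff\<close>)

end

theorem theorem2p2:
  fixes \<alpha> :: real
  assumes "\<not> algebraic \<alpha>"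
  shows "\<forall>A B. (A \<union> B = Qpos \<alpha> \<and> A \<inter> B = {} \<and> A \<noteq> {} \<and> B \<noteq> {}
                  \<and> add_mult_closed A \<and> add_mult_closed B)
         \<longleftrightarrow> ({A, B} = {Hplus \<alpha> \<union> Hzero \<alpha>, Hminus \<alpha>}
              \<or> {A, B} = {Hplus \<alpha>, Hzero \<alpha> \<union> Hminus \<alpha>})"
proof -
  interpret transcendental_point \<alpha>
    using assms by unfold_locales
  show ?thesis
    using semiring_split_iff by (simp add: semiring_split_def)
qed

end
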